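(* Let $0<\rho\le1/3$ and $q\ge2$. Let $X$ be a real random variable with $\mathbb{E}[X]=0$ and $\mathbb{E}[X^2]=1$, and let $Z$ be a standard normal random variable. Then for every $d\in\mathbb{R}$, \[\|1+\rho dX\|_q^q\le\|1+dZ\|_q^q+\beta^q\|dX\|_q^q,\qquad\text{where }\beta=\rho\left(1+\frac{2(q-2)}{\log(1/\rho)}\right).\]
   Context: $\|Y\|_q=(\mathbb{E}|Y|^q)^{1/q}$; $\log$ is the natural logarithm. *)

theory Defs
  imports "HOL-Probability.Probability"
begin

definition qmoment :: "'a measure \<Rightarrow> real \<Rightarrow> ('a \<Rightarrow> real) \<Rightarrow> ennreal" where
  "qmoment M q Y = (\<integral>\<^sup>+ x. ennreal (\<bar>Y x\<bar> powr q) \<partial>M)"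

end

theory Submission
  imports Defs
begin

text \<open>
  Write \<open>k = 1 + 2(q - 2)/log(1/\<rho>)\<close> and \<open>a = q(q - 1)/(4\<rho>\<^sup>2)\<close>. Pointwise,
  \<open>|1 + y|\<^sup>q \<le> 1 + q y + a y\<^sup>2 + k\<^sup>q |y|\<^sup>q\<close>: where \<open>|1 + y| \<le> k |y|\<close> the last term
  alone suffices, and elsewhere \<open>-1/2 < y \<le> log(1/\<rho>)/(2(q - 2))\<close>, a range on which
  the second derivative of \<open>(1 + y)\<^sup>q\<close> is at most \<open>q(q - 1)/sqrt \<rho> \<le> 2a\<close>, so that
  Taylor's formula bounds \<open>(1 + y)\<^sup>q\<close> by the quadratic. Substituting \<open>y = \<rho> d X\<close> and
  taking expectations, the quadratic contributes \<open>1 + q(q - 1)d\<^sup>2/4\<close>. Symmetrising,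
  \<open>|1 + t|\<^sup>q + |1 - t|\<^sup>q \<ge> 2 + q(q - 1)t\<^sup>2/2\<close>, so \<open>E|1 + dZ|\<^sup>q\<close> is at least as large.
\<close>

lemma one_plus_powr_le_quadratic:
  fixes q a y Y :: real
  assumes "q \<ge> 2" "-1 < y" "y \<le> Y" "0 \<le> Y"
    and curvature: "q * (q - 1) * (1 + Y) powr (q - 2) \<le> 2 * a"
  shows "(1 + y) powr q \<le> 1 + q * y + a * y\<^sup>2"
proof -
  define h where "h t = 1 + q * t + a * t\<^sup>2 - (1 + t) powr q" for t :: real
  have "(q + 2 * a * 0 - q * (1 + 0) powr (q - 1)) * (y - 0) \<le> h y - h 0"
  proof (rule f''_imp_f'[of "{-1<..Y}"])
    fix t :: real assume t: "t \<in> {-1<..Y}"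
    show "DERIV h t :> q + 2 * a * t - q * (1 + t) powr (q - 1)"
      unfolding h_def using t by (auto intro!: derivative_eq_intros simp: power2_eq_square)
    show "DERIV (\<lambda>t. q + 2 * a * t - q * (1 + t) powr (q - 1)) t
            :> 2 * a - q * (q - 1) * (1 + t) powr (q - 2)"
      using t by (auto intro!: derivative_eq_intros simp: algebra_simps)
    have "(1 + t) powr (q - 2) \<le> (1 + Y) powr (q - 2)"
      using t assms by (intro powr_mono2) auto
    then have "q * (q - 1) * (1 + t) powr (q - 2) \<le> q * (q - 1) * (1 + Y) powr (q - 2)"
      using assms by (intro mult_left_mono) auto
    then show "0 \<le> 2 * a - q * (q - 1) * (1 + t) powr (q - 2)"
      using curvature by linarith
  qed (use assms in auto)
  then show ?thesis by (simp add: h_def)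
qed

lemma one_plus_powr_ge_quadratic:
  fixes q t :: real
  assumes "q \<ge> 2" "0 \<le> t"
  shows "1 + q * t + q * (q - 1) / 2 * t\<^sup>2 \<le> (1 + t) powr q"
proof -
  define h where "h s = (1 + s) powr q - 1 - q * s - q * (q - 1) / 2 * s\<^sup>2" for s :: real
  have "(q * (1 + 0) powr (q - 1) - q - q * (q - 1) * 0) * (t - 0) \<le> h t - h 0"
  proof (rule f''_imp_f'[of "{0..}"])
    fix s :: real assume s: "s \<in> {0..}"
    show "DERIV h s :> q * (1 + s) powr (q - 1) - q - q * (q - 1) * s"
      unfolding h_def using s by (auto intro!: derivative_eq_intros simp: power2_eq_square)
    show "DERIV (\<lambda>s. q * (1 + s) powr (q - 1) - q - q * (q - 1) * s) s
            :> q * (q - 1) * (1 + s) powr (q - 2) - q * (q - 1)"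
      using s by (auto intro!: derivative_eq_intros simp: algebra_simps)
    have "1 \<le> (1 + s) powr (q - 2)"
      using s assms by (simp add: ge_one_powr_ge_zero)
    then have "q * (q - 1) * 1 \<le> q * (q - 1) * (1 + s) powr (q - 2)"
      using assms by (intro mult_left_mono) auto
    then show "0 \<le> q * (q - 1) * (1 + s) powr (q - 2) - q * (q - 1)"
      by simp
  qed (use assms in auto)
  then show ?thesis by (simp add: h_def)
qed

lemma abs_one_plus_powr_ge_bernoulli:
  fixes q t :: real
  assumes "q \<ge> 1"
  shows "1 + q * t \<le> \<bar>1 + t\<bar> powr q"
proof (cases "t \<le> -1")
  case True
  then have "1 + q * t \<le> 0"
    using assms mult_right_mono_neg[of 1 q t] by linarith
  then show ?thesis by (meson order_trans powr_ge_zero)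
next
  case False
  define h where "h s = (1 + s) powr q" for s :: real
  have "(q * (1 + 0) powr (q - 1)) * (t - 0) \<le> h t - h 0"
  proof (rule f''_imp_f'[of "{-1<..}"])
    fix s :: real assume s: "s \<in> {-1<..}"
    show "DERIV h s :> q * (1 + s) powr (q - 1)"
      unfolding h_def using s by (auto intro!: derivative_eq_intros)
    show "DERIV (\<lambda>s. q * (1 + s) powr (q - 1)) s :> q * (q - 1) * (1 + s) powr (q - 2)"
      using s by (auto intro!: derivative_eq_intros simp: algebra_simps)
    show "0 \<le> q * (q - 1) * (1 + s) powr (q - 2)"
      using assms by simp
  qed (use False in auto)
  then show ?thesis using False by (simp add: h_def)
qed

lemma abs_powr_symmetric_sum_ge:
  fixes q t :: real
  assumes "q \<ge> 2"
  shows "2 + q * (q - 1) / 2 * t\<^sup>2 \<le> \<bar>1 + t\<bar> powr q + \<bar>1 - t\<bar> powr q"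
proof -
  have sum_abs: "\<bar>1 + t\<bar> powr q + \<bar>1 - t\<bar> powr q = (1 + \<bar>t\<bar>) powr q + \<bar>1 + - \<bar>t\<bar>\<bar> powr q"
    by (cases "t \<ge> 0") auto
  have "1 + q * \<bar>t\<bar> + q * (q - 1) / 2 * \<bar>t\<bar>\<^sup>2 \<le> (1 + \<bar>t\<bar>) powr q"
    using assms by (intro one_plus_powr_ge_quadratic) auto
  moreover have "1 + q * - \<bar>t\<bar> \<le> \<bar>1 + - \<bar>t\<bar>\<bar> powr q"
    using assms by (intro abs_one_plus_powr_ge_bernoulli) auto
  ultimately show ?thesis
    unfolding sum_abs by simp
qed

lemma quadratic_nonneg_of_discriminant:
  fixes b c y :: real
  assumes "b\<^sup>2 \<le> 4 * c"
  shows "0 \<le> 1 + b * y + c * y\<^sup>2"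
proof -
  have "0 \<le> (1 + b * y / 2)\<^sup>2" by simp
  also have "\<dots> = 1 + b * y + b\<^sup>2 / 4 * y\<^sup>2" by (simp add: power2_eq_square field_simps)
  also have "\<dots> \<le> 1 + b * y + c * y\<^sup>2" using assms by (intro add_left_mono mult_right_mono) auto
  finally show ?thesis .
qed

lemma one_plus_powr_curvature_le:
  fixes q \<rho> Y :: real
  assumes "q \<ge> 2" "0 < \<rho>" "\<rho> \<le> 1/3" "0 \<le> Y" "(q - 2) * Y \<le> ln (1 / \<rho>) / 2"
  shows "(1 + Y) powr (q - 2) \<le> 1 / (2 * \<rho>\<^sup>2)"
proof -
  have "(1 + Y) powr (q - 2) = exp ((q - 2) * ln (1 + Y))"
    using assms by (simp add: powr_def)
  also have "\<dots> \<le> exp (ln (1 / \<rho>) / 2)"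
    using assms ln_add_one_self_le_self[of Y] mult_left_mono[of "ln (1 + Y)" Y "q - 2"] by simp
  also have "\<dots> = 1 / sqrt \<rho>"
    using assms powr_half_sqrt[of "1 / \<rho>"] by (simp add: powr_def real_sqrt_divide)
  also have "\<dots> \<le> 1 / (2 * \<rho>\<^sup>2)"
  proof -
    have "\<rho> = sqrt \<rho> * sqrt \<rho>" using assms by simp
    also have "\<dots> \<le> sqrt \<rho>" using assms by (intro mult_left_le) auto
    moreover have "\<rho> * \<rho> \<le> 1/3 * \<rho>" using assms by (intro mult_right_mono) auto
    ultimately have "2 * \<rho>\<^sup>2 \<le> sqrt \<rho>" by (simp add: power2_eq_square)
    then show ?thesis using assms by (intro divide_left_mono) auto
  qed
  finally show ?thesis .
qed

lemma quadratic_majorant_nonneg: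
  fixes q \<rho> t :: real
  assumes q: "q \<ge> 2" and \<rho>: "0 < \<rho>" "\<rho> \<le> 1/3"
  shows "0 \<le> 1 + q * \<rho> * t + q * (q - 1) / 4 * t\<^sup>2"
proof -
  have "(q * \<rho>)\<^sup>2 \<le> q\<^sup>2 * (1/3)\<^sup>2"
    using q \<rho> by (simp add: power_mult_distrib mult_left_mono power_mono)
  also have "\<dots> \<le> 4 * (q * (q - 1) / 4)"
  proof -
    have "0 \<le> q * (8 * q - 9)" using q by (intro mult_nonneg_nonneg) auto
    then show ?thesis by (simp add: power2_eq_square algebra_simps)
  qed
  finally show ?thesis
    using quadratic_nonneg_of_discriminant[of "q * \<rho>" "q * (q - 1) / 4" t] by (simp add: mult.assoc)
qed

lemma abs_one_plus_scaled_powr_le: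
  fixes q \<rho> t :: real
  assumes q: "q \<ge> 2" and \<rho>: "0 < \<rho>" "\<rho> \<le> 1/3"
  defines "k \<equiv> 1 + 2 * (q - 2) / ln (1 / \<rho>)"
  shows "\<bar>1 + \<rho> * t\<bar> powr q \<le> 1 + q * \<rho> * t + q * (q - 1) / 4 * t\<^sup>2 + (\<rho> * k) powr q * \<bar>t\<bar> powr q"
proof -
  have L: "0 < ln (1 / \<rho>)" using \<rho> by simp
  have k: "1 \<le> k" unfolding k_def using q L by simp
  have "\<bar>1 + \<rho> * t\<bar> powr q \<le> (\<rho> * k) powr q * \<bar>t\<bar> powr q
        \<or> \<bar>1 + \<rho> * t\<bar> powr q \<le> 1 + q * \<rho> * t + q * (q - 1) / 4 * t\<^sup>2"
  proof (cases "\<bar>1 + \<rho> * t\<bar> \<le> k * \<bar>\<rho> * t\<bar>")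
    case True
    then have "\<bar>1 + \<rho> * t\<bar> powr q \<le> (\<rho> * k * \<bar>t\<bar>) powr q"
      using q \<rho> by (intro powr_mono2) (auto simp: abs_mult mult_ac)
    then show ?thesis using k \<rho> by (simp add: powr_mult)
  next
    case False
    define y where "y = \<rho> * t"
    define a where "a = q * (q - 1) / (4 * \<rho>\<^sup>2)"
    have "\<bar>y\<bar> \<le> k * \<bar>y\<bar>" using k by (simp add: mult_le_cancel_right1)
    then have "\<bar>y\<bar> < \<bar>1 + y\<bar>" using False unfolding y_def by linarith
    then have y: "-1/2 < y" by arith
    have "2 * (q - 2) / ln (1 / \<rho>) * y < 1" if "0 < y"
      using False that unfolding k_def y_def[symmetric] by (simp add: algebra_simps)
    then have "(q - 2) * max 0 y \<le> ln (1 / \<rho>) / 2"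
      using L q by (cases "0 < y") (auto simp: field_simps)
    then have "q * (q - 1) * (1 + max 0 y) powr (q - 2) \<le> q * (q - 1) * (1 / (2 * \<rho>\<^sup>2))"
      using q \<rho> by (intro mult_left_mono one_plus_powr_curvature_le) auto
    also have "\<dots> = 2 * a" unfolding a_def by simp
    finally have "(1 + y) powr q \<le> 1 + q * y + a * y\<^sup>2"
      using q y by (intro one_plus_powr_le_quadratic[where Y = "max 0 y"]) auto
    moreover have "a * y\<^sup>2 = q * (q - 1) / 4 * t\<^sup>2"
      unfolding a_def y_def using \<rho> by (simp add: power_mult_distrib)
    ultimately show ?thesis using y unfolding y_def by (simp add: mult.assoc)
  qed
  moreover have "0 \<le> (\<rho> * k) powr q * \<bar>t\<bar> powr q" by simp
  ultimately show ?thesis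
    using quadratic_majorant_nonneg[OF q \<rho>, of t] by linarith
qed

lemma nn_integral_std_normal_reflect:
  assumes [measurable]: "f \<in> borel_measurable borel"
  shows "(\<integral>\<^sup>+t. ennreal (std_normal_density t) * f (- t) \<partial>lborel)
         = (\<integral>\<^sup>+t. ennreal (std_normal_density t) * f t \<partial>lborel)"
proof -
  have "(\<lambda>t. ennreal (std_normal_density t) * f (- t)) \<in> borel_measurable borel"
    by measurable
  from nn_integral_real_affine[OF this, of "-1" 0] show ?thesis
    by (simp add: normal_density_def)
qed

lemma nn_integral_std_normal_quadratic:
  fixes a b :: real
  assumes "0 \<le> a" "0 \<le> b"
  shows "(\<integral>\<^sup>+t. ennreal (std_normal_density t * (a + b * t\<^sup>2)) \<partial>lborel) = ennreal (a + b)"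
proof -
  have split: "std_normal_density t * (a + b * t\<^sup>2)
               = a * std_normal_density t + b * (std_normal_density t * t\<^sup>2)" for t
    by (simp add: algebra_simps)
  have int: "integrable lborel (\<lambda>t. std_normal_density t * (a + b * t\<^sup>2))"
    unfolding split using integrable_std_normal_moment[of 2]
    by (intro Bochner_Integration.integrable_add Bochner_Integration.integrable_mult_right
        integrable_normal_density) auto
  have "(\<integral>t. std_normal_density t * (a + b * t\<^sup>2) \<partial>lborel) = a + b"
    unfolding split using integrable_std_normal_moment[of 2] integral_std_normal_moment_even[of 1]
    by (subst Bochner_Integration.integral_add) auto
  then show ?thesis
    using nn_integral_eq_integral[OF int] assms by simp
qed

lemma std_normal_qmoment_ge:
  fixes Z :: "'a \<Rightarrow> real" and q d :: real
  assumes Z: "distributed M lborel Z std_normal_density" and q: "q \<ge> 2"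
  shows "ennreal (1 + q * (q - 1) / 4 * d\<^sup>2) \<le> qmoment M q (\<lambda>x. 1 + d * Z x)"
proof -
  define \<phi> where "\<phi> t = ennreal (std_normal_density t)" for t
  define h where "h t = ennreal (\<bar>1 + d * t\<bar> powr q)" for t
  have [measurable]: "h \<in> borel_measurable borel" unfolding h_def by measurable
  have moment: "qmoment M q (\<lambda>x. 1 + d * Z x) = (\<integral>\<^sup>+t. \<phi> t * h t \<partial>lborel)"
    unfolding qmoment_def \<phi>_def using distributed_nn_integral[OF Z, of h] by (simp add: h_def)
  have "2 * ennreal (1 + q * (q - 1) / 4 * d\<^sup>2) = ennreal (2 * (1 + q * (q - 1) / 4 * d\<^sup>2))"
    using q by (subst ennreal_mult) auto
  also have "2 * (1 + q * (q - 1) / 4 * d\<^sup>2) = 2 + q * (q - 1) / 2 * d\<^sup>2"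
    by (simp add: field_simps)
  also have "\<dots> = (\<integral>\<^sup>+t. ennreal (std_normal_density t * (2 + q * (q - 1) / 2 * d\<^sup>2 * t\<^sup>2)) \<partial>lborel)"
    using q by (intro nn_integral_std_normal_quadratic[symmetric]) auto
  also have "\<dots> \<le> (\<integral>\<^sup>+t. \<phi> t * h t + \<phi> t * h (- t) \<partial>lborel)"
  proof (rule nn_integral_mono)
    fix t
    have "2 + q * (q - 1) / 2 * d\<^sup>2 * t\<^sup>2 \<le> \<bar>1 + d * t\<bar> powr q + \<bar>1 - d * t\<bar> powr q"
      using abs_powr_symmetric_sum_ge[OF q, of "d * t"] by (simp add: power_mult_distrib mult_ac)
    then have "std_normal_density t * (2 + q * (q - 1) / 2 * d\<^sup>2 * t\<^sup>2)
               \<le> std_normal_density t * (\<bar>1 + d * t\<bar> powr q + \<bar>1 - d * t\<bar> powr q)"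
      by (intro mult_left_mono) auto
    then show "ennreal (std_normal_density t * (2 + q * (q - 1) / 2 * d\<^sup>2 * t\<^sup>2))
               \<le> \<phi> t * h t + \<phi> t * h (- t)"
      unfolding \<phi>_def h_def
      by (simp add: ennreal_mult[symmetric] ennreal_plus[symmetric] distrib_left del: ennreal_plus)
  qed
  also have "\<dots> = 2 * qmoment M q (\<lambda>x. 1 + d * Z x)"
    unfolding moment \<phi>_def
    by (subst nn_integral_add) (auto simp: nn_integral_std_normal_reflect mult_2)
  finally show ?thesis
    by (subst (asm) ennreal_mult_le_mult_iff) auto
qed

lemma (in prob_space) nn_integral_standardized_quadratic:
  fixes X :: "'a \<Rightarrow> real" and b c :: real
  assumes "integrable M X" "integrable M (\<lambda>x. (X x)\<^sup>2)"
    and "expectation X = 0" "expectation (\<lambda>x. (X x)\<^sup>2) = 1"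
    and nonneg: "\<And>x. 0 \<le> 1 + b * X x + c * (X x)\<^sup>2"
  shows "(\<integral>\<^sup>+x. ennreal (1 + b * X x + c * (X x)\<^sup>2) \<partial>M) = ennreal (1 + c)"
proof -
  have int: "integrable M (\<lambda>x. 1 + b * X x + c * (X x)\<^sup>2)"
    using assms by (intro Bochner_Integration.integrable_add Bochner_Integration.integrable_mult_right) auto
  have "expectation (\<lambda>x. 1 + b * X x + c * (X x)\<^sup>2) = 1 + c"
    using assms by (subst Bochner_Integration.integral_add; (subst Bochner_Integration.integral_add)?)
      (auto simp: prob_space intro!: Bochner_Integration.integrable_add Bochner_Integration.integrable_mult_right)
  then show ?thesis
    using nn_integral_eq_integral[OF int] nonneg by simp
qed

theorem mainTheorem13:
  fixes M :: "'a measure" and X Z :: "'a \<Rightarrow> real" and \<rho> q d :: real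
  assumes "prob_space M"
    and "0 < \<rho>" "\<rho> \<le> 1/3" "q \<ge> 2"
    and "X \<in> borel_measurable M"
    and "integrable M X" "integrable M (\<lambda>x. (X x)\<^sup>2)"
    and "(\<integral>x. X x \<partial>M) = 0" "(\<integral>x. (X x)\<^sup>2 \<partial>M) = 1"
    and "distributed M lborel Z std_normal_density"
  shows "qmoment M q (\<lambda>x. 1 + \<rho> * d * X x)
         \<le> qmoment M q (\<lambda>x. 1 + d * Z x)
           + ennreal ((\<rho> * (1 + 2 * (q - 2) / ln (1 / \<rho>))) powr q)
             * qmoment M q (\<lambda>x. d * X x)"
proof -
  have q: "q \<ge> 2" and \<rho>: "0 < \<rho>" "\<rho> \<le> 1/3" using assms(2-4) by auto
  note [measurable] = assms(5)
  define \<beta> where "\<beta> = \<rho> * (1 + 2 * (q - 2) / ln (1 / \<rho>))"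
  define Q where "Q x = 1 + (q * \<rho> * d) * X x + (q * (q - 1) / 4 * d\<^sup>2) * (X x)\<^sup>2" for x
  have Q_nonneg: "0 \<le> Q x" for x
    using quadratic_majorant_nonneg[OF q \<rho>, of "d * X x"]
    unfolding Q_def by (simp add: power_mult_distrib mult_ac)
  have "ennreal (\<bar>1 + \<rho> * d * X x\<bar> powr q)
        \<le> ennreal (Q x) + ennreal (\<beta> powr q) * ennreal (\<bar>d * X x\<bar> powr q)" for x
    using abs_one_plus_scaled_powr_le[OF q \<rho>, of "d * X x"] Q_nonneg[of x] unfolding Q_def \<beta>_def
    by (simp add: ennreal_mult[symmetric] ennreal_plus[symmetric] power_mult_distrib mult_ac del: ennreal_plus)
  then have "qmoment M q (\<lambda>x. 1 + \<rho> * d * X x)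
             \<le> (\<integral>\<^sup>+x. ennreal (Q x) + ennreal (\<beta> powr q) * ennreal (\<bar>d * X x\<bar> powr q) \<partial>M)"
    unfolding qmoment_def by (rule nn_integral_mono)
  also have "\<dots> = (\<integral>\<^sup>+x. ennreal (Q x) \<partial>M) + ennreal (\<beta> powr q) * qmoment M q (\<lambda>x. d * X x)"
    unfolding qmoment_def Q_def by (simp add: nn_integral_add nn_integral_cmult)
  also have "(\<integral>\<^sup>+x. ennreal (Q x) \<partial>M) = ennreal (1 + q * (q - 1) / 4 * d\<^sup>2)"
    unfolding Q_def using Q_nonneg assms(6-9)
    by (intro prob_space.nn_integral_standardized_quadratic[OF assms(1)]) (auto simp: Q_def)
  also have "\<dots> \<le> qmoment M q (\<lambda>x. 1 + d * Z x)"
    by (rule std_normal_qmoment_ge[OF assms(10) q])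
  finally show ?thesis
    unfolding \<beta>_def by (simp add: add_right_mono)
qed

end
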